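(* For $\lambda\in\mathfrak a^*_{\mathbb C}$ (as meromorphic functions), $$b(\lambda)=C_b\prod_{\beta\in\Sigma_*^+}\frac{\cos\big(\pi(\lambda_\beta-\frac{m_{\beta/2}}4)\big)}{\cos(\pi\lambda_\beta)\sin(\pi\lambda_\beta)}\prod_{\beta\in\Sigma_*^+\setminus\{\beta_1,\dots,\beta_l\}}\sin\big(\pi(\lambda_\beta-\tilde\rho_\beta)\big),$$ where $C_b=2^{-l}\,\tilde c^*(-\rho)/\tilde c(\rho)$.
   Context: Setting. $\mathfrak a$ is an $l$-dimensional real Euclidean space with inner product extended $\mathbb C$-bilinearly. $\Sigma\subset\mathfrak a^*$ is a (possibly non-reduced) root system with Weyl group $W$. $m:\Sigma\to\,]0,\infty[$ is $W$-invariant, $m_\alpha=m(\alpha)$, and $m_\alpha=0$ for $\alpha\notin\Sigma$. Fix positive roots $\Sigma^+$ with simple roots $\alpha_1,\dots,\alpha_l$, and let $\Sigma_*^+=\{\beta\in\Sigma^+:2\beta\notin\Sigma\}$. Set $\lambda_\alpha=\langle\lambda,\alpha\rangle/\langle\alpha,\alpha\rangle$ and $\rho=\frac12\sum_{\alpha\in\Sigma^+}m_\alpha\alpha$. Let $\beta_j=\alpha_j$ if $2\alpha_j\notin\Sigma$ and $\beta_j=2\alpha_j$ otherwise. Set $\lambda_j=\lambda_{\beta_j}$, $\rho_j=\frac12(m_{\beta_j}+m_{\beta_j/2}/2)$, and $\tilde\rho_\beta=\frac12(m_\beta+m_{\beta/2}/2)$ for $\beta\in\Sigma_*^+$. $c$-functions.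 For $\alpha\in\Sigma^+$, $$c_\alpha(\lambda)=\frac{\Gamma(\lambda_\alpha+m_{\alpha/2}/4)}{\Gamma(\lambda_\alpha+m_{\alpha/2}/4+m_\alpha/2)},\qquad c^*_\alpha(\lambda)=\frac{\Gamma(1-\lambda_\alpha-m_{\alpha/2}/4-m_\alpha/2)}{\Gamma(1-\lambda_\alpha-m_{\alpha/2}/4)}.$$ Set $\tilde c=\prod c_\alpha$, $\tilde c^*=\prod c^*_\alpha$, $c=\tilde c/\tilde c(\rho)$, $c^*=\tilde c^*/\tilde c^*(-\rho)$. Then $$b(\lambda):=2^{-l}\frac{c(-\lambda)}{c^*(-\lambda)}\prod_{j=1}^l\frac1{\sin(\pi(\lambda_j-\rho_j))}.$$ *)

theory Defs
  imports "HOL-Analysis.Analysis"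
begin

text \<open>The real space \<open>\<a>\<^sup>*\<close> is modelled by a Euclidean space type 'a (with its
 inner product). An element \<open>\<lambda>\<close> of the complexification is a pair (x, y),
 meaning \<open>\<lambda> = x + i y\<close>.\<close>

definition refl_root :: "'a::euclidean_space \<Rightarrow> 'a \<Rightarrow> 'a" where
  "refl_root \<alpha> v = v - (2 * (v \<bullet> \<alpha>) / (\<alpha> \<bullet> \<alpha>)) *\<^sub>R \<alpha>"

definition root_system :: "'a::euclidean_space set \<Rightarrow> bool" where
  "root_system R \<longleftrightarrow> finite R \<and> 0 \<notin> R \<and> span R = UNIV \<and>
     (\<forall>\<alpha>\<in>R. \<forall>\<beta>\<in>R. refl_root \<alpha> \<beta> \<in> R) \<and>
     (\<forall>\<alpha>\<in>R. \<forall>\<beta>\<in>R. 2 * (\<beta> \<bullet> \<alpha>) / (\<alpha> \<bullet> \<alpha>) \<in> \<int>)"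

definition positive_system :: "'a::euclidean_space set \<Rightarrow> 'a set \<Rightarrow> 'a set \<Rightarrow> bool" where
  "positive_system R P S \<longleftrightarrow> S \<subseteq> P \<and> P \<subseteq> R \<and> R = P \<union> uminus ` P \<and>
     P \<inter> uminus ` P = {} \<and> independent S \<and>
     (\<forall>\<beta>\<in>P. \<exists>k::'a \<Rightarrow> nat. \<beta> = (\<Sum>s\<in>S. real (k s) *\<^sub>R s))"

text \<open>W-invariant positive multiplicity, extended by 0 outside R
 (invariance under all root reflections, which generate W).\<close>
definition multiplicity :: "'a::euclidean_space set \<Rightarrow> ('a \<Rightarrow> real) \<Rightarrow> bool" where
  "multiplicity R m \<longleftrightarrow> (\<forall>\<alpha>\<in>R. m \<alpha> > 0) \<and> (\<forall>\<alpha>. \<alpha> \<notin> R \<longrightarrow> m \<alpha> = 0) \<and>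
     (\<forall>\<alpha>\<in>R. \<forall>\<beta>\<in>R. m (refl_root \<alpha> \<beta>) = m \<beta>)"

definition lcoord :: "'a::euclidean_space \<times> 'a \<Rightarrow> 'a \<Rightarrow> complex" where
  "lcoord lam \<alpha> = Complex (fst lam \<bullet> \<alpha>) (snd lam \<bullet> \<alpha>) / complex_of_real (\<alpha> \<bullet> \<alpha>)"

definition rho :: "'a::euclidean_space set \<Rightarrow> ('a \<Rightarrow> real) \<Rightarrow> 'a" where
  "rho P m = (1/2) *\<^sub>R (\<Sum>\<alpha>\<in>P. m \<alpha> *\<^sub>R \<alpha>)"

definition half :: "'a::euclidean_space \<Rightarrow> 'a" where
  "half \<alpha> = (1/2) *\<^sub>R \<alpha>"

definition c_alpha :: "('a::euclidean_space \<Rightarrow> real) \<Rightarrow> 'a \<Rightarrow> 'a \<times> 'a \<Rightarrow> complex" where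
  "c_alpha m \<alpha> lam =
     Gamma (lcoord lam \<alpha> + of_real (m (half \<alpha>) / 4)) /
     Gamma (lcoord lam \<alpha> + of_real (m (half \<alpha>) / 4) + of_real (m \<alpha> / 2))"

definition cstar_alpha :: "('a::euclidean_space \<Rightarrow> real) \<Rightarrow> 'a \<Rightarrow> 'a \<times> 'a \<Rightarrow> complex" where
  "cstar_alpha m \<alpha> lam =
     Gamma (1 - lcoord lam \<alpha> - of_real (m (half \<alpha>) / 4) - of_real (m \<alpha> / 2)) /
     Gamma (1 - lcoord lam \<alpha> - of_real (m (half \<alpha>) / 4))"

definition c_tilde :: "'a::euclidean_space set \<Rightarrow> ('a \<Rightarrow> real) \<Rightarrow> 'a \<times> 'a \<Rightarrow> complex" where
  "c_tilde P m lam = (\<Prod>\<alpha>\<in>P. c_alpha m \<alpha> lam)"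

definition cstar_tilde :: "'a::euclidean_space set \<Rightarrow> ('a \<Rightarrow> real) \<Rightarrow> 'a \<times> 'a \<Rightarrow> complex" where
  "cstar_tilde P m lam = (\<Prod>\<alpha>\<in>P. cstar_alpha m \<alpha> lam)"

definition c_fun :: "'a::euclidean_space set \<Rightarrow> ('a \<Rightarrow> real) \<Rightarrow> 'a \<times> 'a \<Rightarrow> complex" where
  "c_fun P m lam = c_tilde P m lam / c_tilde P m (rho P m, 0)"

definition cstar_fun :: "'a::euclidean_space set \<Rightarrow> ('a \<Rightarrow> real) \<Rightarrow> 'a \<times> 'a \<Rightarrow> complex" where
  "cstar_fun P m lam = cstar_tilde P m lam / cstar_tilde P m (- rho P m, 0)"

definition beta_of :: "'a::euclidean_space set \<Rightarrow> 'a \<Rightarrow> 'a" where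
  "beta_of R \<alpha> = (if 2 *\<^sub>R \<alpha> \<in> R then 2 *\<^sub>R \<alpha> else \<alpha>)"

definition rho_tilde :: "('a::euclidean_space \<Rightarrow> real) \<Rightarrow> 'a \<Rightarrow> real" where
  "rho_tilde m \<beta> = (m \<beta> + m (half \<beta>) / 2) / 2"

definition pos_star :: "'a::euclidean_space set \<Rightarrow> 'a set \<Rightarrow> 'a set" where
  "pos_star R P = {\<beta>\<in>P. 2 *\<^sub>R \<beta> \<notin> R}"

definition b_fun :: "'a::euclidean_space set \<Rightarrow> 'a set \<Rightarrow> 'a set \<Rightarrow> ('a \<Rightarrow> real) \<Rightarrow> 'a \<times> 'a \<Rightarrow> complex" where
  "b_fun R P S m lam =
     (1 / 2 ^ DIM('a)) * c_fun P m (- lam) / cstar_fun P m (- lam) *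
     (\<Prod>s\<in>S. 1 / sin (of_real pi * (lcoord lam (beta_of R s) - of_real (rho_tilde m (beta_of R s)))))"

end

theory Submission
  imports Defs
begin

(* Write L = lambda_alpha.  By the Gamma reflection formula each rank-one
   quotient c_alpha(-lambda) / c*_alpha(-lambda) equals
     sin(pi(-L + m_{alpha/2}/4 + m_alpha/2)) / sin(pi(-L + m_{alpha/2}/4)),
   so c(-lambda)/c*(-lambda) is the constant c~*(-rho)/c~(rho) times a product of such
   sine quotients over the positive roots.  Every positive root is either an unmultipliable
   root beta in Sigma_*^+ or half of one, and "half of beta" is a root exactly when it is
   positive; for the non-roots among the halves the quotient is 1.  Grouping the factors
   for beta/2 and beta, a double-angle computation turns each pair into the product of the
   cosine factor of the theorem and sin(pi(lambda_beta - rho~_beta)).  Finally the simple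
   roots give an injection j |-> beta_j into Sigma_*^+, and the factors
   sin(pi(lambda_j - rho_j)) cancel against the 1/sin factors in the definition of b. *)

lemma sin_pi_times_nonzero:
  fixes w :: complex assumes "Im w \<noteq> 0" shows "sin (of_real pi * w) \<noteq> 0"
proof
  assume "sin (of_real pi * w) = 0"
  then obtain n :: int where "of_real pi * w = of_real (n * pi)" by (auto simp: sin_eq_0)
  then have "Im (of_real pi * w) = 0" by (metis Im_complex_of_real)
  with assms show False by simp
qed

lemma cos_pi_times_nonzero:
  fixes w :: complex assumes "Im w \<noteq> 0" shows "cos (of_real pi * w) \<noteq> 0"
proof
  assume "cos (of_real pi * w) = 0"
  then obtain n :: int where "of_real pi * w = of_real (n * pi) + of_real pi / 2"
    by (auto simp: cos_eq_0)
  then have "Im (of_real pi * w) = Im (of_real (n * pi) + of_real pi / 2)" by simp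
  with assms show False by simp
qed

(* The quotient of a c-type and a c*-type Gamma ratio is a sine ratio, by applying
   the reflection formula Gamma(w) Gamma(1-w) = pi / sin(pi w) twice. *)
lemma Gamma_quotient_reflection:
  fixes z :: complex and b :: real
  assumes "Im z \<noteq> 0"
  shows "(Gamma z / Gamma (z + of_real b)) / (Gamma (1 - z - of_real b) / Gamma (1 - z))
     = sin (of_real pi * (z + of_real b)) / sin (of_real pi * z)"
proof -
  have not_pole: "w \<notin> \<int>\<^sub>\<le>\<^sub>0" if "Im w \<noteq> 0" for w :: complex
    using that by (auto elim!: nonpos_Ints_cases)
  have Im_nonzero: "Im (z + of_real b) \<noteq> 0" "Im (1 - z) \<noteq> 0" "Im (1 - z - of_real b) \<noteq> 0"
    using assms by auto
  have refl_z: "Gamma z * Gamma (1 - z) = of_real pi / sin (of_real pi * z)"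
    by (rule Gamma_reflection_complex)
  have refl_zb: "Gamma (z + of_real b) * Gamma (1 - z - of_real b)
      = of_real pi / sin (of_real pi * (z + of_real b))"
    using Gamma_reflection_complex[of "z + of_real b"] by (simp add: diff_diff_eq)
  have "Gamma z \<noteq> 0" "Gamma (z + of_real b) \<noteq> 0" "Gamma (1 - z) \<noteq> 0" "Gamma (1 - z - of_real b) \<noteq> 0"
    using not_pole assms Im_nonzero by (auto intro!: Gamma_nonzero)
  then have "(Gamma z / Gamma (z + of_real b)) / (Gamma (1 - z - of_real b) / Gamma (1 - z))
      = (Gamma z * Gamma (1 - z)) / (Gamma (z + of_real b) * Gamma (1 - z - of_real b))"
    by (simp add: field_simps)
  also have "\<dots> = sin (of_real pi * (z + of_real b)) / sin (of_real pi * z)"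
    unfolding refl_z refl_zb
    using sin_pi_times_nonzero assms Im_nonzero(1) by (simp add: field_simps)
  finally show ?thesis .
qed

(* The trigonometric heart of the theorem: the sine quotients for the roots beta/2
   (multiplicities 0 and a) and beta (multiplicities a and b) combine into the cosine
   factor times sin(pi(L - rho~_beta)).  For a = 0 the first quotient is 1. *)
lemma sine_quotient_pair:
  fixes L :: complex and a b :: real
  assumes "Im L \<noteq> 0"
  shows "sin (of_real pi * (- (2 * L) + of_real (a / 2))) / sin (of_real pi * (- (2 * L)))
       * (sin (of_real pi * (- L + of_real (a / 4) + of_real (b / 2))) / sin (of_real pi * (- L + of_real (a / 4))))
    = cos (of_real pi * (L - of_real (a / 4))) / (cos (of_real pi * L) * sin (of_real pi * L))
       * sin (of_real pi * (L - of_real ((b + a / 2) / 2)))"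
proof -
  define u where "u = of_real pi * (L - of_real (a / 4))"
  have nonzero: "cos (of_real pi * L) \<noteq> 0" "sin (of_real pi * L) \<noteq> 0" "sin u \<noteq> 0"
    using assms cos_pi_times_nonzero sin_pi_times_nonzero unfolding u_def by auto
  have arguments: "of_real pi * (- (2 * L) + of_real (a / 2)) = - (2 * u)"
       "of_real pi * (- (2 * L)) = - (2 * (of_real pi * L))"
       "of_real pi * (- L + of_real (a / 4) + of_real (b / 2)) = - (of_real pi * (L - of_real ((b + a / 2) / 2)))"
       "of_real pi * (- L + of_real (a / 4)) = - u"
    unfolding u_def by (simp_all add: algebra_simps)
  show ?thesis
    unfolding arguments u_def[symmetric] sin_minus sin_double using nonzero by (simp add: field_simps)
qed

lemma lcoord_scaleR: "c \<noteq> 0 \<Longrightarrow> lcoord lam (c *\<^sub>R \<alpha>) = lcoord lam \<alpha> / of_real c"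
  unfolding lcoord_def by (simp add: complex_eq_iff field_simps power2_eq_square)

lemma lcoord_half: "lcoord lam (half \<alpha>) = 2 * lcoord lam \<alpha>"
  unfolding half_def by (simp add: lcoord_scaleR)

lemma lcoord_uminus: "lcoord (- lam) \<alpha> = - lcoord lam \<alpha>"
  unfolding lcoord_def by (simp add: complex_eq_iff field_simps)

lemma Im_lcoord: "Im (lcoord lam \<alpha>) = (snd lam \<bullet> \<alpha>) / (\<alpha> \<bullet> \<alpha>)"
  unfolding lcoord_def by (simp add: Im_divide_of_real)

definition c_quot :: "('a::euclidean_space \<Rightarrow> real) \<Rightarrow> 'a \<Rightarrow> 'a \<times> 'a \<Rightarrow> complex" where
  "c_quot m \<alpha> lam = c_alpha m \<alpha> (- lam) / cstar_alpha m \<alpha> (- lam)"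

definition cos_factor :: "('a::euclidean_space \<Rightarrow> real) \<Rightarrow> 'a \<Rightarrow> 'a \<times> 'a \<Rightarrow> complex" where
  "cos_factor m \<beta> lam = cos (of_real pi * (lcoord lam \<beta> - of_real (m (half \<beta>) / 4))) /
     (cos (of_real pi * lcoord lam \<beta>) * sin (of_real pi * lcoord lam \<beta>))"

definition sin_factor :: "('a::euclidean_space \<Rightarrow> real) \<Rightarrow> 'a \<Rightarrow> 'a \<times> 'a \<Rightarrow> complex" where
  "sin_factor m \<beta> lam = sin (of_real pi * (lcoord lam \<beta> - of_real (rho_tilde m \<beta>)))"

lemma c_quot_eq:
  assumes "Im (lcoord lam \<alpha>) \<noteq> 0"
  shows "c_quot m \<alpha> lam =
    sin (of_real pi * (- lcoord lam \<alpha> + of_real (m (half \<alpha>) / 4) + of_real (m \<alpha> / 2))) /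
    sin (of_real pi * (- lcoord lam \<alpha> + of_real (m (half \<alpha>) / 4)))"
proof -
  define z where "z = - lcoord lam \<alpha> + of_real (m (half \<alpha>) / 4)"
  have Im_z: "Im z \<noteq> 0" unfolding z_def using assms by simp
  have args: "- lcoord lam \<alpha> + of_real (m (half \<alpha>) / 4) = z"
    "- lcoord lam \<alpha> + of_real (m (half \<alpha>) / 4) + of_real (m \<alpha> / 2) = z + of_real (m \<alpha> / 2)"
    "1 - - lcoord lam \<alpha> - of_real (m (half \<alpha>) / 4) = 1 - z"
    "1 - - lcoord lam \<alpha> - of_real (m (half \<alpha>) / 4) - of_real (m \<alpha> / 2) = 1 - z - of_real (m \<alpha> / 2)"
    unfolding z_def by simp_all
  show ?thesis
    unfolding c_quot_def c_alpha_def cstar_alpha_def lcoord_uminus args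
    by (rule Gamma_quotient_reflection[OF Im_z])
qed

lemma c_quot_trivial:
  assumes "Im (lcoord lam \<alpha>) \<noteq> 0" and "m \<alpha> = 0" and "m (half \<alpha>) = 0"
  shows "c_quot m \<alpha> lam = 1"
  using c_quot_eq[OF assms(1), of m] assms sin_pi_times_nonzero[of "- lcoord lam \<alpha>"] by simp

lemma c_quot_pair:
  assumes "Im (lcoord lam \<beta>) \<noteq> 0" and "m (half (half \<beta>)) = 0"
  shows "c_quot m (half \<beta>) lam * c_quot m \<beta> lam = cos_factor m \<beta> lam * sin_factor m \<beta> lam"
proof -
  have "Im (lcoord lam (half \<beta>)) \<noteq> 0" using assms(1) by (simp add: lcoord_half)
  then show ?thesis
    using c_quot_eq[of lam "half \<beta>" m] c_quot_eq[OF assms(1), of m]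
      sine_quotient_pair[OF assms(1), of "m (half \<beta>)" "m \<beta>"] assms(2)
    unfolding cos_factor_def sin_factor_def rho_tilde_def lcoord_half by simp
qed

(* In a crystallographic root system alpha and 4 alpha are never both roots, since
   the Cartan integer of the pair would be 1/2. *)
lemma root_system_no_quadruple:
  assumes R: "root_system R" and "\<alpha> \<in> R" shows "(4::real) *\<^sub>R \<alpha> \<notin> R"
proof
  assume "(4::real) *\<^sub>R \<alpha> \<in> R"
  with assms have cartan_int: "2 * (\<alpha> \<bullet> (4 *\<^sub>R \<alpha>)) / ((4 *\<^sub>R \<alpha>) \<bullet> (4 *\<^sub>R \<alpha>)) \<in> \<int>"
    unfolding root_system_def by blast
  have "\<alpha> \<noteq> 0" using assms unfolding root_system_def by auto
  then have "2 * (\<alpha> \<bullet> (4 *\<^sub>R \<alpha>)) / ((4 *\<^sub>R \<alpha>) \<bullet> (4 *\<^sub>R \<alpha>)) = (1 / 2 :: real)"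
    by (simp add: inner_commute)
  with cartan_int obtain n :: int where "1 / 2 = real_of_int n" by (auto elim: Ints_cases)
  then have "1 = 2 * n" by linarith
  then show False by presburger
qed

(* A negative multiple of a positive root is not positive: its coordinates in the
   simple roots would have to be both nonnegative and nonpositive. *)
lemma positive_system_no_negative_multiple:
  assumes PS: "positive_system R P S" and "0 \<notin> R" and "\<beta> \<in> P" and "t < 0"
  shows "t *\<^sub>R \<beta> \<notin> P"
proof
  assume "t *\<^sub>R \<beta> \<in> P"
  moreover have coords: "\<forall>\<gamma>\<in>P. \<exists>k::'a \<Rightarrow> nat. \<gamma> = (\<Sum>s\<in>S. real (k s) *\<^sub>R s)"
    using PS unfolding positive_system_def by blast
  ultimately obtain k k' :: "'a \<Rightarrow> nat"
    where k: "\<beta> = (\<Sum>s\<in>S. real (k s) *\<^sub>R s)" and k': "t *\<^sub>R \<beta> = (\<Sum>s\<in>S. real (k' s) *\<^sub>R s)"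
    using \<open>\<beta> \<in> P\<close> by meson
  have indep: "independent S" using PS unfolding positive_system_def by blast
  have "(\<Sum>s\<in>S. (real (k' s) - t * real (k s)) *\<^sub>R s)
      = (\<Sum>s\<in>S. real (k' s) *\<^sub>R s) - t *\<^sub>R (\<Sum>s\<in>S. real (k s) *\<^sub>R s)"
    by (simp add: scaleR_diff_left sum_subtractf scaleR_sum_right)
  also have "\<dots> = 0" unfolding k[symmetric] k'[symmetric] by simp
  finally have coeff_eq: "real (k' s) = t * real (k s)" if "s \<in> S" for s
    using indep that unfolding independent_explicit
    by (auto dest!: spec[of _ "\<lambda>s. real (k' s) - t * real (k s)"])
  have "k s = 0" if "s \<in> S" for s
  proof -
    have "t * real (k s) \<le> 0" using \<open>t < 0\<close> by (simp add: mult_nonpos_nonneg)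
    with coeff_eq[OF that] have "t * real (k s) = 0" by linarith
    with \<open>t < 0\<close> show ?thesis by simp
  qed
  then have "\<beta> = 0" using k by simp
  with assms(2,3) PS show False unfolding positive_system_def by blast
qed

lemma positive_system_positive_multiple:
  assumes PS: "positive_system R P S" and "0 \<notin> R" and "\<beta> \<in> P" and "t > 0" and "t *\<^sub>R \<beta> \<in> R"
  shows "t *\<^sub>R \<beta> \<in> P"
proof (rule ccontr)
  assume "t *\<^sub>R \<beta> \<notin> P"
  with assms(5) PS have "(- t) *\<^sub>R \<beta> \<in> P" unfolding positive_system_def by force
  with positive_system_no_negative_multiple[OF PS assms(2,3), of "- t"] \<open>t > 0\<close> show False by simp
qed

lemma half_double [simp]: "half ((2::real) *\<^sub>R \<alpha>) = \<alpha>"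
  unfolding half_def by simp

lemma double_half [simp]: "(2::real) *\<^sub>R half \<alpha> = \<alpha>"
  unfolding half_def by simp

lemma pos_star_subset: "pos_star R P \<subseteq> P"
  unfolding pos_star_def by blast

lemma positive_roots_cover:
  assumes R: "root_system R" and PS: "positive_system R P S"
  shows "P \<subseteq> pos_star R P \<union> half ` pos_star R P"
proof
  fix \<alpha> assume "\<alpha> \<in> P"
  show "\<alpha> \<in> pos_star R P \<union> half ` pos_star R P"
  proof (cases "(2::real) *\<^sub>R \<alpha> \<in> R")
    case True
    have "0 \<notin> R" using R unfolding root_system_def by blast
    with True \<open>\<alpha> \<in> P\<close> have "(2::real) *\<^sub>R \<alpha> \<in> P"
      using positive_system_positive_multiple[OF PS] by simp
    moreover have "(2::real) *\<^sub>R ((2::real) *\<^sub>R \<alpha>) \<notin> R"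
      using root_system_no_quadruple[OF R, of \<alpha>] \<open>\<alpha> \<in> P\<close> PS
      unfolding positive_system_def by auto
    ultimately have "(2::real) *\<^sub>R \<alpha> \<in> pos_star R P" unfolding pos_star_def by blast
    then show ?thesis by (metis UnI2 half_double image_eqI)
  next
    case False
    with \<open>\<alpha> \<in> P\<close> show ?thesis unfolding pos_star_def by blast
  qed
qed

lemma pos_star_half_disjoint:
  assumes "P \<subseteq> R" shows "pos_star R P \<inter> half ` pos_star R P = {}"
  using assms unfolding pos_star_def by fastforce

lemma half_pos_star_nonroot:
  assumes R: "root_system R" and PS: "positive_system R P S"
    and "\<beta> \<in> pos_star R P" and "half \<beta> \<notin> P"
  shows "half \<beta> \<notin> R" and "half (half \<beta>) \<notin> R"
proof -
  have "\<beta> \<in> P" and "P \<subseteq> R" and "0 \<notin> R"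
    using assms(3) PS R unfolding pos_star_def positive_system_def root_system_def by auto
  show "half \<beta> \<notin> R"
    using positive_system_positive_multiple[OF PS \<open>0 \<notin> R\<close> \<open>\<beta> \<in> P\<close>, of "1/2"] assms(4)
    unfolding half_def by auto
  show "half (half \<beta>) \<notin> R"
    using root_system_no_quadruple[OF R, of "half (half \<beta>)"] \<open>\<beta> \<in> P\<close> \<open>P \<subseteq> R\<close>
    unfolding half_def by auto
qed

lemma beta_of_in_pos_star:
  assumes R: "root_system R" and PS: "positive_system R P S" and "s \<in> S"
  shows "beta_of R s \<in> pos_star R P"
proof -
  have "s \<in> P" and "0 \<notin> R" and "P \<subseteq> R"
    using assms unfolding positive_system_def root_system_def by auto
  show ?thesis
  proof (cases "(2::real) *\<^sub>R s \<in> R")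
    case True
    then have "(2::real) *\<^sub>R s \<in> P"
      using positive_system_positive_multiple[OF PS \<open>0 \<notin> R\<close> \<open>s \<in> P\<close>] by simp
    moreover have "(2::real) *\<^sub>R ((2::real) *\<^sub>R s) \<notin> R"
      using root_system_no_quadruple[OF R, of s] \<open>s \<in> P\<close> \<open>P \<subseteq> R\<close> by auto
    ultimately show ?thesis using True unfolding beta_of_def pos_star_def by auto
  next
    case False
    with \<open>s \<in> P\<close> show ?thesis unfolding beta_of_def pos_star_def by auto
  qed
qed

lemma inj_on_beta_of:
  assumes "independent S" shows "inj_on (beta_of R) S"
proof -
  have no_double: "(2::real) *\<^sub>R x \<noteq> y" if "x \<in> S" "y \<in> S" "x \<noteq> y" for x y
  proof
    assume "(2::real) *\<^sub>R x = y"
    moreover have "(2::real) *\<^sub>R x \<in> span (S - {y})"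
      using that by (intro span_mul span_base) blast
    ultimately show False using assms that(2) unfolding dependent_def by blast
  qed
  show ?thesis
    by (rule inj_onI) (auto simp: beta_of_def split: if_splits dest: no_double)
qed

lemma prod_c_quot_positive:
  assumes R: "root_system R" and PS: "positive_system R P S" and M: "multiplicity R m"
    and Im_nonzero: "\<forall>\<alpha>\<in>R. Im (lcoord lam \<alpha>) \<noteq> 0"
  shows "(\<Prod>\<alpha>\<in>P. c_quot m \<alpha> lam)
    = (\<Prod>\<beta>\<in>pos_star R P. cos_factor m \<beta> lam) * (\<Prod>\<beta>\<in>pos_star R P. sin_factor m \<beta> lam)"
proof -
  define Pst where "Pst = pos_star R P"
  have "P \<subseteq> R" and "finite R" using PS R unfolding positive_system_def root_system_def by auto
  then have "finite Pst" using pos_star_subset[of R P] unfolding Pst_def by (meson finite_subset)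
  have m_zero: "m \<alpha> = 0" if "\<alpha> \<notin> R" for \<alpha> using M that unfolding multiplicity_def by blast
  have Im_Pst: "Im (lcoord lam \<beta>) \<noteq> 0" if "\<beta> \<in> Pst" for \<beta>
    using Im_nonzero that pos_star_subset \<open>P \<subseteq> R\<close> unfolding Pst_def by blast
  have "(\<Prod>\<alpha>\<in>P. c_quot m \<alpha> lam) = (\<Prod>\<alpha>\<in>Pst \<union> half ` Pst. c_quot m \<alpha> lam)"
  proof (rule prod.mono_neutral_left)
    show "P \<subseteq> Pst \<union> half ` Pst" unfolding Pst_def by (rule positive_roots_cover[OF R PS])
    show "\<forall>\<alpha>\<in>Pst \<union> half ` Pst - P. c_quot m \<alpha> lam = 1"
    proof
      fix \<alpha> assume "\<alpha> \<in> Pst \<union> half ` Pst - P"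
      then obtain \<beta> where "\<beta> \<in> Pst" "\<alpha> = half \<beta>" "half \<beta> \<notin> P"
        using pos_star_subset[of R P] unfolding Pst_def by blast
      then show "c_quot m \<alpha> lam = 1"
        using half_pos_star_nonroot[OF R PS] Im_Pst m_zero
        by (intro c_quot_trivial) (auto simp: lcoord_half Pst_def)
    qed
  qed (use \<open>finite Pst\<close> in simp)
  also have "\<dots> = (\<Prod>\<beta>\<in>Pst. c_quot m \<beta> lam) * (\<Prod>\<alpha>\<in>half ` Pst. c_quot m \<alpha> lam)"
    using pos_star_half_disjoint[OF \<open>P \<subseteq> R\<close>] \<open>finite Pst\<close> unfolding Pst_def
    by (intro prod.union_disjoint) auto
  also have "(\<Prod>\<alpha>\<in>half ` Pst. c_quot m \<alpha> lam) = (\<Prod>\<beta>\<in>Pst. c_quot m (half \<beta>) lam)"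
    by (rule prod.reindex_cong[of half]) (auto simp: inj_on_def half_def)
  also have "(\<Prod>\<beta>\<in>Pst. c_quot m \<beta> lam) * \<dots>
      = (\<Prod>\<beta>\<in>Pst. cos_factor m \<beta> lam * sin_factor m \<beta> lam)"
  proof -
    have "c_quot m (half \<beta>) lam * c_quot m \<beta> lam = cos_factor m \<beta> lam * sin_factor m \<beta> lam"
      if "\<beta> \<in> Pst" for \<beta>
    proof (rule c_quot_pair[OF Im_Pst[OF that]])
      have "\<beta> \<in> R" using that pos_star_subset \<open>P \<subseteq> R\<close> unfolding Pst_def by blast
      then have "half (half \<beta>) \<notin> R"
        using root_system_no_quadruple[OF R, of "half (half \<beta>)"] unfolding half_def by auto
      then show "m (half (half \<beta>)) = 0" by (rule m_zero)
    qed
    then show ?thesis by (simp add: prod.distrib[symmetric] mult.commute cong: prod.cong)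
  qed
  finally show ?thesis unfolding Pst_def by (simp add: prod.distrib)
qed

lemma c_fun_quotient:
  "c_fun P m (- lam) / cstar_fun P m (- lam)
    = cstar_tilde P m (- rho P m, 0) / c_tilde P m (rho P m, 0) * (\<Prod>\<alpha>\<in>P. c_quot m \<alpha> lam)"
  unfolding c_fun_def cstar_fun_def c_tilde_def cstar_tilde_def c_quot_def prod_dividef
  by (simp add: field_simps)

lemma simple_root_factors_cancel:
  assumes R: "root_system R" and PS: "positive_system R P S"
    and Im_nonzero: "\<forall>\<alpha>\<in>R. Im (lcoord lam \<alpha>) \<noteq> 0"
  shows "(\<Prod>\<beta>\<in>pos_star R P. sin_factor m \<beta> lam) * (\<Prod>s\<in>S. 1 / sin_factor m (beta_of R s) lam)
    = (\<Prod>\<beta>\<in>pos_star R P - beta_of R ` S. sin_factor m \<beta> lam)"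
proof -
  define B where "B = beta_of R ` S"
  have "P \<subseteq> R" and "finite R" and "independent S"
    using PS R unfolding positive_system_def root_system_def by auto
  then have "finite (pos_star R P)" using pos_star_subset[of R P] by (meson finite_subset)
  have "B \<subseteq> pos_star R P" using beta_of_in_pos_star[OF R PS] unfolding B_def by blast
  have "sin_factor m \<beta> lam \<noteq> 0" if "\<beta> \<in> B" for \<beta>
  proof -
    have "\<beta> \<in> R" using that \<open>B \<subseteq> pos_star R P\<close> pos_star_subset \<open>P \<subseteq> R\<close> by blast
    then show ?thesis using Im_nonzero unfolding sin_factor_def by (intro sin_pi_times_nonzero) simp
  qed
  then have nonzero: "(\<Prod>\<beta>\<in>B. sin_factor m \<beta> lam) \<noteq> 0"
    using finite_subset[OF \<open>B \<subseteq> pos_star R P\<close> \<open>finite (pos_star R P)\<close>] by simp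
  have "(\<Prod>s\<in>S. 1 / sin_factor m (beta_of R s) lam) = 1 / (\<Prod>\<beta>\<in>B. sin_factor m \<beta> lam)"
    unfolding B_def prod_dividef prod.reindex[OF inj_on_beta_of[OF \<open>independent S\<close>]] by simp
  moreover have "(\<Prod>\<beta>\<in>pos_star R P. sin_factor m \<beta> lam)
      = (\<Prod>\<beta>\<in>pos_star R P - B. sin_factor m \<beta> lam) * (\<Prod>\<beta>\<in>B. sin_factor m \<beta> lam)"
    by (rule prod.subset_diff[OF \<open>B \<subseteq> pos_star R P\<close> \<open>finite (pos_star R P)\<close>])
  ultimately show ?thesis using nonzero unfolding B_def by simp
qed

lemma Im_lcoord_nonzero:
  assumes "0 \<notin> R" and "\<forall>\<alpha>\<in>R. snd lam \<bullet> \<alpha> \<noteq> 0"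
  shows "\<forall>\<alpha>\<in>R. Im (lcoord lam \<alpha>) \<noteq> 0"
  using assms unfolding Im_lcoord by fastforce

theorem mainTheorem5:
  fixes R P S :: "'a::euclidean_space set" and m :: "'a \<Rightarrow> real" and lam :: "'a \<times> 'a"
  assumes "root_system R" and "positive_system R P S" and "multiplicity R m"
    and "\<forall>\<alpha>\<in>R. snd lam \<bullet> \<alpha> \<noteq> 0"
  shows "b_fun R P S m lam =
    (1 / 2 ^ DIM('a)) * cstar_tilde P m (- rho P m, 0) / c_tilde P m (rho P m, 0) *
    (\<Prod>\<beta>\<in>pos_star R P.
        cos (of_real pi * (lcoord lam \<beta> - of_real (m (half \<beta>) / 4))) /
        (cos (of_real pi * lcoord lam \<beta>) * sin (of_real pi * lcoord lam \<beta>))) *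
    (\<Prod>\<beta>\<in>pos_star R P - beta_of R ` S.
        sin (of_real pi * (lcoord lam \<beta> - of_real (rho_tilde m \<beta>))))"
proof -
  have Im_nonzero: "\<forall>\<alpha>\<in>R. Im (lcoord lam \<alpha>) \<noteq> 0"
    using assms(1,4) unfolding root_system_def by (intro Im_lcoord_nonzero) auto
  define C where "C = (1 / 2 ^ DIM('a)) * cstar_tilde P m (- rho P m, 0) / c_tilde P m (rho P m, 0)"
  have "b_fun R P S m lam = (1 / 2 ^ DIM('a)) * (c_fun P m (- lam) / cstar_fun P m (- lam)) *
      (\<Prod>s\<in>S. 1 / sin_factor m (beta_of R s) lam)"
    unfolding b_fun_def sin_factor_def by simp
  also have "\<dots> = C * (\<Prod>\<alpha>\<in>P. c_quot m \<alpha> lam) * (\<Prod>s\<in>S. 1 / sin_factor m (beta_of R s) lam)"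
    unfolding c_fun_quotient C_def by (simp add: field_simps)
  also have "\<dots> = C * (\<Prod>\<beta>\<in>pos_star R P. cos_factor m \<beta> lam) *
      ((\<Prod>\<beta>\<in>pos_star R P. sin_factor m \<beta> lam) * (\<Prod>s\<in>S. 1 / sin_factor m (beta_of R s) lam))"
    unfolding prod_c_quot_positive[OF assms(1-3) Im_nonzero] by (simp add: mult.assoc)
  also have "\<dots> = C * (\<Prod>\<beta>\<in>pos_star R P. cos_factor m \<beta> lam) *
      (\<Prod>\<beta>\<in>pos_star R P - beta_of R ` S. sin_factor m \<beta> lam)"
    unfolding simple_root_factors_cancel[OF assms(1,2) Im_nonzero] ..
  finally show ?thesis unfolding C_def cos_factor_def sin_factor_def .
qed

end
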